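(* Assume there exists a $1$-perfect code in $H(q+1,q)$. Let $f$ be a $(b,c)$-coloring of $H(n,q)$ with main eigenvalue $\lambda\le0$. Then for all $t_1,t_2\in\{0,\dots,q\}$ with $t_1+t_2\notin\{0,2q\}$ there exists a $\big(q(b+c)-(ct_1+bt_2),\ ct_1+bt_2\big)$-coloring $F$ of $H(qn-\lambda,q)$, and $F$ has main eigenvalue $\lambda$.
   Context: The Hamming graph $H(n,q)$ has vertex set $\mathbb{Z}_q^n$, two vertices adjacent iff they differ in exactly one coordinate. A perfect $2$-coloring is a surjective map onto $\{1,2\}$ such that each vertex of color $i$ has a constant number of neighbours of each color. A $(b,c)$-coloring of $H(n,q)$ is a perfect $2$-coloring in which each color-1 vertex has exactly $b$ neighbours of color 2 and each color-2 vertex has exactly $c$ neighbours of color 1; its main eigenvalue is $\lambda=n(q-1)-(b+c)$. A $1$-perfect code in $H(n,q)$ is a set $C$ of vertices such that every radius-$1$ Hamming ball contains exactly one element of $C$. *)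

theory Defs
  imports Main
begin

definition hamming_vertices :: "nat \<Rightarrow> nat \<Rightarrow> nat list set" where
  "hamming_vertices n q = {x. length x = n \<and> set x \<subseteq> {..<q}}"

definition hamming_dist :: "nat list \<Rightarrow> nat list \<Rightarrow> nat" where
  "hamming_dist x y = card {i. i < length x \<and> x ! i \<noteq> y ! i}"

definition hamming_adj :: "nat list \<Rightarrow> nat list \<Rightarrow> bool" where
  "hamming_adj x y \<longleftrightarrow> hamming_dist x y = 1"

definition nbr_count :: "nat \<Rightarrow> nat \<Rightarrow> (nat list \<Rightarrow> nat) \<Rightarrow> nat list \<Rightarrow> nat \<Rightarrow> nat" where
  "nbr_count n q f x i = card {y \<in> hamming_vertices n q. hamming_adj x y \<and> f y = i}"

definition perfect_2_coloring :: "nat \<Rightarrow> nat \<Rightarrow> (nat list \<Rightarrow> nat) \<Rightarrow> bool" where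
  "perfect_2_coloring n q f \<longleftrightarrow>
     f ` hamming_vertices n q = {1, 2} \<and>
     (\<forall>i\<in>{1,2::nat}. \<forall>j\<in>{1,2::nat}. \<exists>m. \<forall>x\<in>hamming_vertices n q.
         f x = i \<longrightarrow> nbr_count n q f x j = m)"

definition bc_coloring :: "nat \<Rightarrow> nat \<Rightarrow> nat \<Rightarrow> nat \<Rightarrow> (nat list \<Rightarrow> nat) \<Rightarrow> bool" where
  "bc_coloring n q b c f \<longleftrightarrow>
     perfect_2_coloring n q f \<and>
     (\<forall>x\<in>hamming_vertices n q. f x = 1 \<longrightarrow> nbr_count n q f x 2 = b) \<and>
     (\<forall>x\<in>hamming_vertices n q. f x = 2 \<longrightarrow> nbr_count n q f x 1 = c)"

definition main_eigenvalue :: "nat \<Rightarrow> nat \<Rightarrow> nat \<Rightarrow> nat \<Rightarrow> int" where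
  "main_eigenvalue n q b c = int n * (int q - 1) - (int b + int c)"

definition perfect_code_1 :: "nat \<Rightarrow> nat \<Rightarrow> nat list set \<Rightarrow> bool" where
  "perfect_code_1 n q C \<longleftrightarrow> C \<subseteq> hamming_vertices n q \<and>
     (\<forall>x\<in>hamming_vertices n q. \<exists>!y. y \<in> C \<and> hamming_dist x y \<le> 1)"

end

(*
  A 1-perfect code C in H(q+1,q) labels every word u of H(q,q) by a pair (p, r) of letters:
  shifting the last letter of u by p and appending r yields a codeword.  Every word of length
  q-1 is the prefix of exactly one codeword (codewords are at distance at least 3, and a
  counting argument gives existence), so adjacent words have different p, and every word has
  exactly one neighbour with each label (p', r), p' distinct from its own p.

  Write m = -lambda = b + c - n(q-1) and cut a word x of H(qn+m, q) into n blocks of length q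
  followed by m single letters.  Let y collect the first label components of the blocks and let
  z be the sum mod q of the second components and of the m single letters.  Then the map
  x |-> (y, z) sends the neighbourhood of x onto all pairs (y', z') with y' adjacent to y, each
  once, and onto the pairs (y, z'), z' /= z, each m times.  Colouring x by 1 iff z < t_(f y)
  is therefore a perfect colouring, and its parameters follow from those of f together with
  b + c = n(q-1) + m.
*)
theory Submission
  imports Defs
begin

section \<open>Translations in \<open>\<int>\<^sub>q\<close>\<close>

lemma mod_below_twice:
  fixes s q :: nat
  assumes "s < 2 * q"
  shows "s mod q = (if s < q then s else s - q)"
  using assms by (simp add: mod_if le_mod_geq)

lemma mod_add_right_inj:
  fixes a b p q :: nat
  assumes "a < q" "b < q" "(a + p) mod q = (b + p) mod q"
  shows "a = b"
proof -
  define r where "r = p mod q"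
  have "r < q" using assms(1) unfolding r_def by simp
  moreover have "(a + r) mod q = (b + r) mod q"
    using assms(3) unfolding r_def by (simp add: mod_add_right_eq)
  moreover note mod_below_twice[of "a + r" q] mod_below_twice[of "b + r" q]
  ultimately show ?thesis using assms(1,2) by (simp split: if_splits)
qed

lemma mod_add_eq_iff:
  fixes y a p q :: nat
  assumes "y < q" "a < q" "p < q"
  shows "(y + p) mod q = a \<longleftrightarrow> p = (a + q - y) mod q"
  using assms mod_below_twice[of "y + p" q] mod_below_twice[of "a + q - y" q]
  by (auto split: if_splits)

lemma bij_betw_mod_add:
  fixes c q :: nat
  assumes "0 < q"
  shows "bij_betw (\<lambda>z. (z + c) mod q) {..<q} {..<q}"
proof -
  have inj: "inj_on (\<lambda>z. (z + c) mod q) {..<q}"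
    by (auto intro: inj_onI mod_add_right_inj)
  moreover have "(\<lambda>z. (z + c) mod q) ` {..<q} = {..<q}"
    using assms by (intro endo_inj_surj[OF _ _ inj]) auto
  ultimately show ?thesis unfolding bij_betw_def by blast
qed

lemma sum_lessThan_mod_add:
  fixes c q :: nat
  assumes "0 < q"
  shows "(\<Sum>z<q. h ((z + c) mod q)) = (\<Sum>z<q. h z)"
  using sum.reindex_bij_betw[OF bij_betw_mod_add[OF assms]] .

lemma sum_lessThan_remove_mod_add:
  fixes c q z\<^sub>0 :: nat
  assumes "z\<^sub>0 < q"
  shows "(\<Sum>z\<in>{..<q} - {z\<^sub>0}. h ((z + c) mod q)) = (\<Sum>z\<in>{..<q} - {(z\<^sub>0 + c) mod q}. h z)"
proof -
  have "bij_betw (\<lambda>z. (z + c) mod q) ({..<q} - {z\<^sub>0}) ({..<q} - {(z\<^sub>0 + c) mod q})"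
    using assms by (intro bij_betw_DiffI bij_betw_mod_add) auto
  then show ?thesis by (rule sum.reindex_bij_betw)
qed

section \<open>Hamming graph\<close>

lemma hamming_vertices_length: "x \<in> hamming_vertices n q \<Longrightarrow> length x = n"
  unfolding hamming_vertices_def by simp

lemma hamming_vertices_nth: "x \<in> hamming_vertices n q \<Longrightarrow> i < n \<Longrightarrow> x ! i < q"
  unfolding hamming_vertices_def by (auto dest: nth_mem)

lemma finite_hamming_vertices: "finite (hamming_vertices n q)"
proof -
  have "hamming_vertices n q = {xs. set xs \<subseteq> {..<q} \<and> length xs = n}"
    unfolding hamming_vertices_def by auto
  then show ?thesis using finite_lists_length_eq[of "{..<q}" n] by simp
qed

lemma Nil_in_hamming_vertices_iff [simp]: "x \<in> hamming_vertices 0 q \<longleftrightarrow> x = []"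
  unfolding hamming_vertices_def by auto

lemma singleton_in_hamming_vertices_iff [simp]: "[a] \<in> hamming_vertices (Suc 0) q \<longleftrightarrow> a < q"
  unfolding hamming_vertices_def by auto

lemma append_in_hamming_vertices_iff:
  "length u = k \<Longrightarrow> u @ v \<in> hamming_vertices (k + l) q \<longleftrightarrow>
     u \<in> hamming_vertices k q \<and> v \<in> hamming_vertices l q"
  unfolding hamming_vertices_def by auto

lemma hamming_vertices_append_split:
  assumes "x \<in> hamming_vertices (k + l) q"
  shows "x = take k x @ drop k x" "take k x \<in> hamming_vertices k q" "drop k x \<in> hamming_vertices l q"
  using assms unfolding hamming_vertices_def by (auto dest: in_set_takeD in_set_dropD)

lemma hamming_vertices_Suc_split:
  assumes "x \<in> hamming_vertices (Suc k) q"
  shows "x = butlast x @ [last x]" "butlast x \<in> hamming_vertices k q" "last x < q"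
proof -
  have "x \<noteq> []" using assms hamming_vertices_length by fastforce
  then show "x = butlast x @ [last x]" by simp
  then show "butlast x \<in> hamming_vertices k q" "last x < q"
    using assms append_in_hamming_vertices_iff[of "butlast x" k "[last x]" 1 q]
    by (auto simp: hamming_vertices_length)
qed

lemma hamming_dist_self [simp]: "hamming_dist x x = 0"
  unfolding hamming_dist_def by simp

lemma hamming_dist_eq_0_iff:
  "length x = length y \<Longrightarrow> hamming_dist x y = 0 \<longleftrightarrow> x = y"
  unfolding hamming_dist_def by (auto intro: nth_equalityI)

lemma hamming_dist_commute: "length x = length y \<Longrightarrow> hamming_dist x y = hamming_dist y x"
  unfolding hamming_dist_def by metis

lemma hamming_dist_le_length: "hamming_dist x y \<le> length x"
proof -
  have "{i. i < length x \<and> x ! i \<noteq> y ! i} \<subseteq> {..<length x}" by auto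
  then show ?thesis unfolding hamming_dist_def by (metis card_lessThan card_mono finite_lessThan)
qed

lemma hamming_dist_singleton: "hamming_dist [a] [b] = (if a = b then 0 else 1)"
proof -
  have "{i. i < length [a] \<and> [a] ! i \<noteq> [b] ! i} = (if a = b then {} else {0})" by auto
  then show ?thesis unfolding hamming_dist_def by simp
qed

lemma hamming_dist_append:
  assumes "length u = length u'"
  shows "hamming_dist (u @ v) (u' @ v') = hamming_dist u u' + hamming_dist v v'"
proof -
  let ?D = "\<lambda>x y. {i. i < length x \<and> x ! i \<noteq> y ! i}"
  have "?D (u @ v) (u' @ v') = ?D u u' \<union> (\<lambda>i. length u + i) ` ?D v v'"
  proof (intro set_eqI iffI)
    fix i assume "i \<in> ?D (u @ v) (u' @ v')"
    then show "i \<in> ?D u u' \<union> (\<lambda>i. length u + i) ` ?D v v'"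
      using assms by (cases "i < length u") (auto simp: nth_append image_iff intro!: exI[of _ "i - length u"])
  qed (use assms in \<open>auto simp: nth_append\<close>)
  moreover have "?D u u' \<inter> (\<lambda>i. length u + i) ` ?D v v' = {}" by auto
  ultimately show ?thesis
    unfolding hamming_dist_def by (simp add: card_Un_disjoint card_image)
qed

lemma hamming_dist_Cons [simp]:
  "hamming_dist (a # x) (b # y) = (if a = b then 0 else 1) + hamming_dist x y"
  using hamming_dist_append[of "[a]" "[b]" x y] by (simp add: hamming_dist_singleton)

definition hamming_nbrs :: "nat \<Rightarrow> nat \<Rightarrow> nat list \<Rightarrow> nat list set" where
  "hamming_nbrs n q x = {y \<in> hamming_vertices n q. hamming_adj x y}"

lemma finite_hamming_nbrs [simp]: "finite (hamming_nbrs n q x)"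
  unfolding hamming_nbrs_def using finite_hamming_vertices by simp

lemma hamming_nbrs_Nil [simp]: "hamming_nbrs 0 q [] = {}"
  unfolding hamming_nbrs_def hamming_adj_def by simp

lemma hamming_nbrs_singleton: "hamming_nbrs (Suc 0) q [a] = (\<lambda>b. [b]) ` ({..<q} - {a})"
proof -
  have "y \<in> hamming_vertices (Suc 0) q \<longleftrightarrow> (\<exists>b<q. y = [b])" for y
    unfolding hamming_vertices_def by (auto simp: length_Suc_conv)
  then show ?thesis
    unfolding hamming_nbrs_def hamming_adj_def by (auto simp: hamming_dist_singleton)
qed

lemma hamming_nbrs_append:
  assumes u: "u \<in> hamming_vertices k q" and v: "v \<in> hamming_vertices l q"
  shows "hamming_nbrs (k + l) q (u @ v) =
    (\<lambda>u'. u' @ v) ` hamming_nbrs k q u \<union> (\<lambda>v'. u @ v') ` hamming_nbrs l q v"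
proof (intro set_eqI iffI)
  fix w assume "w \<in> hamming_nbrs (k + l) q (u @ v)"
  then have w: "w \<in> hamming_vertices (k + l) q" and "hamming_dist (u @ v) w = 1"
    unfolding hamming_nbrs_def hamming_adj_def by auto
  moreover note split = hamming_vertices_append_split[OF w]
  ultimately have "hamming_dist u (take k w) + hamming_dist v (drop k w) = 1"
    using u hamming_dist_append[of u "take k w" v "drop k w"] by (simp add: hamming_vertices_length)
  moreover have "length u = length (take k w)" "length v = length (drop k w)"
    using hamming_vertices_length[OF u] hamming_vertices_length[OF v]
      hamming_vertices_length[OF split(2)] hamming_vertices_length[OF split(3)] by simp_all
  ultimately have "hamming_dist u (take k w) = 1 \<and> v = drop k w \<or> u = take k w \<and> hamming_dist v (drop k w) = 1"
    by (simp add: add_is_1 hamming_dist_eq_0_iff)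
  then show "w \<in> (\<lambda>u'. u' @ v) ` hamming_nbrs k q u \<union> (\<lambda>v'. u @ v') ` hamming_nbrs l q v"
  proof
    assume "hamming_dist u (take k w) = 1 \<and> v = drop k w"
    then have "take k w \<in> hamming_nbrs k q u" "w = take k w @ v"
      using split unfolding hamming_nbrs_def hamming_adj_def by auto
    then show ?thesis by blast
  next
    assume "u = take k w \<and> hamming_dist v (drop k w) = 1"
    then have "drop k w \<in> hamming_nbrs l q v" "w = u @ drop k w"
      using split unfolding hamming_nbrs_def hamming_adj_def by auto
    then show ?thesis by blast
  qed
next
  fix w assume "w \<in> (\<lambda>u'. u' @ v) ` hamming_nbrs k q u \<union> (\<lambda>v'. u @ v') ` hamming_nbrs l q v"
  then show "w \<in> hamming_nbrs (k + l) q (u @ v)"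
    using u v unfolding hamming_nbrs_def hamming_adj_def
    by (auto simp: hamming_dist_append append_in_hamming_vertices_iff hamming_vertices_length)
qed

lemma sum_hamming_nbrs_append:
  assumes u: "u \<in> hamming_vertices k q" and v: "v \<in> hamming_vertices l q"
  shows "(\<Sum>w\<in>hamming_nbrs (k + l) q (u @ v). g w) =
    (\<Sum>u'\<in>hamming_nbrs k q u. g (u' @ v)) + (\<Sum>v'\<in>hamming_nbrs l q v. g (u @ v'))"
proof -
  have "(\<lambda>u'. u' @ v) ` hamming_nbrs k q u \<inter> (\<lambda>v'. u @ v') ` hamming_nbrs l q v = {}"
    using u unfolding hamming_nbrs_def hamming_adj_def
    by (auto simp: hamming_vertices_length)
  then show ?thesis
    unfolding hamming_nbrs_append[OF u v]
    by (simp add: sum.union_disjoint sum.reindex inj_on_def)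
qed

lemma card_hamming_nbrs: "x \<in> hamming_vertices n q \<Longrightarrow> card (hamming_nbrs n q x) = n * (q - 1)"
proof (induction n arbitrary: x)
  case (Suc n)
  then have x: "x \<in> hamming_vertices (1 + n) q" by simp
  note split = hamming_vertices_append_split[OF x]
  obtain a where a: "take 1 x = [a]" "a < q"
    using split(2) unfolding hamming_vertices_def by (auto simp: length_Suc_conv)
  have "card (hamming_nbrs (1 + n) q x) = card (hamming_nbrs 1 q [a]) + card (hamming_nbrs n q (drop 1 x))"
    using sum_hamming_nbrs_append[OF split(2,3), of "\<lambda>_. 1::nat"] split(1) a by simp
  also have "\<dots> = Suc n * (q - 1)"
    using Suc.IH[OF split(3)] a by (simp add: hamming_nbrs_singleton card_image inj_on_def)
  finally show ?case by simp
qed simp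

lemma hamming_adj_commute:
  "x \<in> hamming_vertices n q \<Longrightarrow> y \<in> hamming_vertices n q \<Longrightarrow> hamming_adj x y \<longleftrightarrow> hamming_adj y x"
  unfolding hamming_adj_def by (simp add: hamming_dist_commute hamming_vertices_length)

lemma nbr_count_eq_sum:
  "nbr_count n q f x i = (\<Sum>y\<in>hamming_nbrs n q x. if f y = i then 1 else 0)"
proof -
  have "nbr_count n q f x i = card {y \<in> hamming_nbrs n q x. f y = i}"
    unfolding nbr_count_def hamming_nbrs_def by (simp add: conj_assoc)
  then show ?thesis by (subst sum.inter_filter[symmetric]) simp_all
qed

lemma exists_change_point: "P 0 \<noteq> P n \<Longrightarrow> \<exists>k<n. P k \<noteq> P (Suc k)"
proof (induction n)
  case (Suc n)
  show ?case
  proof (cases "P 0 = P n")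
    case True
    then show ?thesis using Suc.prems by auto
  next
    case False
    then show ?thesis using Suc.IH less_SucI by blast
  qed
qed simp

lemma hamming_bichromatic_edge:
  assumes y: "y \<in> hamming_vertices n q" and y': "y' \<in> hamming_vertices n q" and "f y \<noteq> f y'"
  shows "\<exists>z\<in>hamming_vertices n q. \<exists>z'\<in>hamming_vertices n q. hamming_adj z z' \<and> f z \<noteq> f z'"
proof -
  define w where "w k = take k y' @ drop k y" for k
  have len: "length y = n" "length y' = n"
    using y y' by (simp_all add: hamming_vertices_length)
  have w_in: "w k \<in> hamming_vertices n q" for k
    using y y' len unfolding w_def hamming_vertices_def by (auto dest: in_set_takeD in_set_dropD)
  have "w 0 = y" "w n = y'" unfolding w_def using len by simp_all
  then obtain k where k: "k < n" "f (w k) \<noteq> f (w (Suc k))"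
    using exists_change_point[of "\<lambda>k. f (w k)" n] \<open>f y \<noteq> f y'\<close> by auto
  have "w k = take k y' @ [y ! k] @ drop (Suc k) y" "w (Suc k) = take k y' @ [y' ! k] @ drop (Suc k) y"
    using k len unfolding w_def by (simp_all add: Cons_nth_drop_Suc take_Suc_conv_app_nth)
  then have "hamming_dist (w k) (w (Suc k)) \<le> 1"
    by (simp add: hamming_dist_append)
  moreover have "length (w k) = length (w (Suc k))"
    using w_in[of k] w_in[of "Suc k"] by (simp add: hamming_vertices_length)
  then have "hamming_dist (w k) (w (Suc k)) \<noteq> 0"
    using k hamming_dist_eq_0_iff by auto
  ultimately have "hamming_adj (w k) (w (Suc k))" unfolding hamming_adj_def by simp
  then show ?thesis using w_in k by blast
qed

section \<open>Perfect 2-colourings\<close>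

lemma nbr_count_pos:
  "y \<in> hamming_vertices n q \<Longrightarrow> hamming_adj x y \<Longrightarrow> 0 < nbr_count n q f x (f y)"
  unfolding nbr_count_def using finite_hamming_vertices by (auto simp: card_gt_0_iff)

lemma nbr_count_pos_imp_ex: "0 < nbr_count n q f x j \<Longrightarrow> \<exists>y\<in>hamming_vertices n q. f y = j"
  unfolding nbr_count_def by (auto simp: card_gt_0_iff)

lemma perfect_2_coloring_two_le:
  assumes "perfect_2_coloring n q f"
  shows "2 \<le> q"
proof (rule ccontr)
  assume "\<not> 2 \<le> q"
  then have "hamming_vertices n q \<subseteq> {replicate n 0}"
    unfolding hamming_vertices_def by (auto simp: subset_iff intro!: replicate_eqI)
  then have "f ` hamming_vertices n q \<subseteq> {f (replicate n 0)}" by auto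
  then show False using assms unfolding perfect_2_coloring_def by auto
qed

lemma bc_coloring_pos:
  assumes "bc_coloring n q b c f"
  shows "0 < b" "0 < c"
proof -
  have img: "f ` hamming_vertices n q = {1, 2}"
    using assms unfolding bc_coloring_def perfect_2_coloring_def by simp
  then obtain y y' where "y \<in> hamming_vertices n q" "y' \<in> hamming_vertices n q" "f y = 1" "f y' = 2"
    by (metis image_iff insertCI)
  then obtain z z' where z: "z \<in> hamming_vertices n q" "z' \<in> hamming_vertices n q"
    and "hamming_adj z z'" "f z \<noteq> f z'"
    using hamming_bichromatic_edge[of y n q y' f] by auto
  moreover have "f z \<in> {1, 2}" "f z' \<in> {1, 2}" using z img by auto
  ultimately obtain x x' where x: "x \<in> hamming_vertices n q" "x' \<in> hamming_vertices n q"
    and adj: "hamming_adj x x'" "hamming_adj x' x" and "f x = 1" "f x' = 2"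
    using hamming_adj_commute[OF z] by auto
  then show "0 < b" "0 < c"
    using assms nbr_count_pos[OF x(2) adj(1), of f] nbr_count_pos[OF x(1) adj(2), of f]
    unfolding bc_coloring_def by auto
qed

lemma nbr_count_1_add_2:
  assumes "\<forall>y\<in>hamming_vertices n q. f y \<in> {1, 2}" and "x \<in> hamming_vertices n q"
  shows "nbr_count n q f x 1 + nbr_count n q f x 2 = n * (q - 1)"
proof -
  have "nbr_count n q f x 1 + nbr_count n q f x 2 = (\<Sum>y\<in>hamming_nbrs n q x. 1)"
    unfolding nbr_count_eq_sum sum.distrib[symmetric]
    by (rule sum.cong) (use assms(1) in \<open>auto simp: hamming_nbrs_def\<close>)
  then show ?thesis using card_hamming_nbrs[OF assms(2)] by simp
qed

lemma bc_coloring_weighted_nbr_sum: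
  assumes f: "bc_coloring n q b c f" and bc: "b + c = n * (q - 1) + m"
    and y: "y \<in> hamming_vertices n q"
  shows "(\<Sum>y'\<in>hamming_nbrs n q y. w (f y')) + m * w (f y) = c * w 1 + b * w 2"
proof -
  have vals: "\<forall>y\<in>hamming_vertices n q. f y \<in> {1, 2}"
    using f unfolding bc_coloring_def perfect_2_coloring_def by blast
  have "(\<Sum>y'\<in>hamming_nbrs n q y. w (f y')) =
      (\<Sum>y'\<in>hamming_nbrs n q y. w 1 * (if f y' = 1 then 1 else 0) + w 2 * (if f y' = 2 then 1 else 0))"
    by (rule sum.cong) (use vals in \<open>auto simp: hamming_nbrs_def\<close>)
  also have "\<dots> = w 1 * nbr_count n q f y 1 + w 2 * nbr_count n q f y 2"
    by (simp add: nbr_count_eq_sum sum.distrib sum_distrib_left)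
  finally have sum: "(\<Sum>y'\<in>hamming_nbrs n q y. w (f y')) = \<dots>" .
  have deg: "nbr_count n q f y 1 + nbr_count n q f y 2 = n * (q - 1)"
    using nbr_count_1_add_2[OF vals y] .
  show ?thesis
  proof (cases "f y = 1")
    case True
    then have "nbr_count n q f y 2 = b" using f y unfolding bc_coloring_def by blast
    moreover have "nbr_count n q f y 1 + m = c" using deg bc calculation by simp
    ultimately show ?thesis using sum True by (simp add: algebra_simps flip: \<open>nbr_count n q f y 1 + m = c\<close>)
  next
    case False
    then have "f y = 2" using vals y by blast
    then have "nbr_count n q f y 1 = c" using f y unfolding bc_coloring_def by blast
    moreover have "nbr_count n q f y 2 + m = b" using deg bc calculation by simp
    ultimately show ?thesis using sum \<open>f y = 2\<close> by (simp add: algebra_simps flip: \<open>nbr_count n q f y 2 + m = b\<close>)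
  qed
qed

lemma bc_coloringI:
  assumes vals: "\<forall>x\<in>hamming_vertices N q. F x \<in> {1, 2}"
    and b: "\<forall>x\<in>hamming_vertices N q. F x = 1 \<longrightarrow> nbr_count N q F x 2 = b"
    and c: "\<forall>x\<in>hamming_vertices N q. F x = 2 \<longrightarrow> nbr_count N q F x 1 = c"
    and "0 < b" "0 < c" "0 < q"
  shows "bc_coloring N q b c F"
proof -
  have x0: "replicate N 0 \<in> hamming_vertices N q"
    using \<open>0 < q\<close> unfolding hamming_vertices_def by auto
  have "\<exists>x\<in>hamming_vertices N q. F x = 1" "\<exists>x\<in>hamming_vertices N q. F x = 2"
    using vals[rule_format, OF x0] x0 b c \<open>0 < b\<close> \<open>0 < c\<close>
      nbr_count_pos_imp_ex[of N q F "replicate N 0" 1] nbr_count_pos_imp_ex[of N q F "replicate N 0" 2]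
    by auto
  then have img: "F ` hamming_vertices N q = {1, 2}"
    using vals by (auto intro: rev_image_eqI)
  have "\<forall>x\<in>hamming_vertices N q. F x = 1 \<longrightarrow> nbr_count N q F x 1 = N * (q - 1) - b"
    "\<forall>x\<in>hamming_vertices N q. F x = 2 \<longrightarrow> nbr_count N q F x 2 = N * (q - 1) - c"
    using b c nbr_count_1_add_2[OF vals] by (metis add_diff_cancel_left' add_diff_cancel_right')+
  then show ?thesis
    unfolding bc_coloring_def perfect_2_coloring_def using img b c by blast
qed

section \<open>Equitable maps\<close>

text \<open>\<open>\<Psi>\<close> maps \<open>H(N,q)\<close> to \<open>H(n,q) \<times> \<int>\<^sub>q\<close>, viewed as the multigraph in which \<open>(y, z)\<close> is
  joined once to each \<open>(y', z')\<close> with \<open>y'\<close> adjacent to \<open>y\<close>, and \<open>m\<close> times to each \<open>(y, z')\<close> with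
  \<open>z' \<noteq> z\<close>; the image of the neighbourhood of \<open>x\<close>, counted with multiplicity, is the
  neighbourhood of \<open>\<Psi> x\<close>.  Such maps pull perfect colourings back to perfect colourings.\<close>
definition equitable_map :: "nat \<Rightarrow> nat \<Rightarrow> nat \<Rightarrow> nat \<Rightarrow> (nat list \<Rightarrow> nat list \<times> nat) \<Rightarrow> bool" where
  "equitable_map N q n m \<Psi> \<longleftrightarrow> (\<forall>x\<in>hamming_vertices N q.
     fst (\<Psi> x) \<in> hamming_vertices n q \<and> snd (\<Psi> x) < q \<and>
     (\<forall>g. (\<Sum>x'\<in>hamming_nbrs N q x. g (\<Psi> x')) =
          (\<Sum>y\<in>hamming_nbrs n q (fst (\<Psi> x)). \<Sum>z<q. g (y, z)) +
          m * (\<Sum>z\<in>{..<q} - {snd (\<Psi> x)}. g (fst (\<Psi> x), z))))"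

lemma equitable_mapD:
  assumes "equitable_map N q n m \<Psi>" "x \<in> hamming_vertices N q"
  shows "fst (\<Psi> x) \<in> hamming_vertices n q" "snd (\<Psi> x) < q"
    "(\<Sum>x'\<in>hamming_nbrs N q x. g (\<Psi> x')) =
       (\<Sum>y\<in>hamming_nbrs n q (fst (\<Psi> x)). \<Sum>z<q. g (y, z)) +
       m * (\<Sum>z\<in>{..<q} - {snd (\<Psi> x)}. g (fst (\<Psi> x), z))"
  using assms unfolding equitable_map_def by blast+

lemma equitable_map_Nil: "0 < q \<Longrightarrow> equitable_map 0 q 0 0 (\<lambda>_. ([], 0))"
  unfolding equitable_map_def by simp

lemma equitable_map_coordinate: "equitable_map (Suc 0) q 0 (Suc 0) (\<lambda>x. ([], hd x))"
proof -
  have "x \<in> hamming_vertices (Suc 0) q \<longleftrightarrow> (\<exists>a<q. x = [a])" for x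
    unfolding hamming_vertices_def by (auto simp: length_Suc_conv)
  then show ?thesis
    unfolding equitable_map_def by (auto simp: hamming_nbrs_singleton sum.reindex inj_on_def)
qed

lemma equitable_map_sum_translate:
  assumes \<Psi>: "equitable_map N q n m \<Psi>" and x: "x \<in> hamming_vertices N q" and \<Psi>x: "\<Psi> x = (y\<^sub>0, z\<^sub>0)"
  shows "(\<Sum>x'\<in>hamming_nbrs N q x. g (h (fst (\<Psi> x')), (snd (\<Psi> x') + c) mod q)) =
    (\<Sum>y\<in>hamming_nbrs n q y\<^sub>0. \<Sum>z<q. g (h y, z)) + m * (\<Sum>z\<in>{..<q} - {(z\<^sub>0 + c) mod q}. g (h y\<^sub>0, z))"
proof -
  have z\<^sub>0: "z\<^sub>0 < q" using equitable_mapD(2)[OF \<Psi> x] \<Psi>x by simp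
  then have "0 < q" by simp
  have "(\<Sum>x'\<in>hamming_nbrs N q x. g (h (fst (\<Psi> x')), (snd (\<Psi> x') + c) mod q)) =
      (\<Sum>y\<in>hamming_nbrs n q y\<^sub>0. \<Sum>z<q. g (h y, (z + c) mod q)) +
      m * (\<Sum>z\<in>{..<q} - {z\<^sub>0}. g (h y\<^sub>0, (z + c) mod q))"
    using equitable_mapD(3)[OF \<Psi> x, of "\<lambda>p. g (h (fst p), (snd p + c) mod q)"] \<Psi>x by simp
  also have "\<dots> = (\<Sum>y\<in>hamming_nbrs n q y\<^sub>0. \<Sum>z<q. g (h y, z)) +
      m * (\<Sum>z\<in>{..<q} - {(z\<^sub>0 + c) mod q}. g (h y\<^sub>0, z))"
    using sum_lessThan_mod_add[OF \<open>0 < q\<close>, of "\<lambda>z. g (h _, z)" c]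
      sum_lessThan_remove_mod_add[OF z\<^sub>0, of "\<lambda>z. g (h y\<^sub>0, z)" c] by simp
  finally show ?thesis .
qed

lemma equitable_map_append:
  assumes \<Psi>\<^sub>1: "equitable_map N\<^sub>1 q n\<^sub>1 m\<^sub>1 \<Psi>\<^sub>1" and \<Psi>\<^sub>2: "equitable_map N\<^sub>2 q n\<^sub>2 m\<^sub>2 \<Psi>\<^sub>2"
  shows "equitable_map (N\<^sub>1 + N\<^sub>2) q (n\<^sub>1 + n\<^sub>2) (m\<^sub>1 + m\<^sub>2)
    (\<lambda>x. (fst (\<Psi>\<^sub>1 (take N\<^sub>1 x)) @ fst (\<Psi>\<^sub>2 (drop N\<^sub>1 x)),
          (snd (\<Psi>\<^sub>1 (take N\<^sub>1 x)) + snd (\<Psi>\<^sub>2 (drop N\<^sub>1 x))) mod q))"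
    (is "equitable_map _ _ _ _ ?\<Psi>")
  unfolding equitable_map_def
proof (intro ballI conjI allI)
  fix x assume x: "x \<in> hamming_vertices (N\<^sub>1 + N\<^sub>2) q"
  define u v where "u = take N\<^sub>1 x" and "v = drop N\<^sub>1 x"
  note split = hamming_vertices_append_split[OF x, folded u_def v_def]
  obtain y\<^sub>1 z\<^sub>1 y\<^sub>2 z\<^sub>2 where \<Psi>u: "\<Psi>\<^sub>1 u = (y\<^sub>1, z\<^sub>1)" and \<Psi>v: "\<Psi>\<^sub>2 v = (y\<^sub>2, z\<^sub>2)" by fastforce
  have y\<^sub>1: "y\<^sub>1 \<in> hamming_vertices n\<^sub>1 q" "z\<^sub>1 < q" and y\<^sub>2: "y\<^sub>2 \<in> hamming_vertices n\<^sub>2 q" "z\<^sub>2 < q"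
    using equitable_mapD[OF \<Psi>\<^sub>1 split(2)] equitable_mapD[OF \<Psi>\<^sub>2 split(3)] \<Psi>u \<Psi>v by auto
  have \<Psi>x: "?\<Psi> x = (y\<^sub>1 @ y\<^sub>2, (z\<^sub>1 + z\<^sub>2) mod q)"
    using \<Psi>u \<Psi>v unfolding u_def v_def by simp
  show "fst (?\<Psi> x) \<in> hamming_vertices (n\<^sub>1 + n\<^sub>2) q" "snd (?\<Psi> x) < q"
    using y\<^sub>1 y\<^sub>2 \<Psi>x by (simp_all add: append_in_hamming_vertices_iff hamming_vertices_length)
  fix g :: "nat list \<times> nat \<Rightarrow> nat"
  have "length u' = N\<^sub>1" if "u' \<in> hamming_nbrs N\<^sub>1 q u" for u'
    using that hamming_vertices_length unfolding hamming_nbrs_def by blast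
  then have "(\<Sum>u'\<in>hamming_nbrs N\<^sub>1 q u. g (?\<Psi> (u' @ v))) =
      (\<Sum>u'\<in>hamming_nbrs N\<^sub>1 q u. g (fst (\<Psi>\<^sub>1 u') @ y\<^sub>2, (snd (\<Psi>\<^sub>1 u') + z\<^sub>2) mod q))"
    using \<Psi>v by (intro sum.cong) simp_all
  also have "\<dots> = (\<Sum>y\<in>hamming_nbrs n\<^sub>1 q y\<^sub>1. \<Sum>z<q. g (y @ y\<^sub>2, z)) +
      m\<^sub>1 * (\<Sum>z\<in>{..<q} - {snd (?\<Psi> x)}. g (fst (?\<Psi> x), z))"
    using equitable_map_sum_translate[OF \<Psi>\<^sub>1 split(2) \<Psi>u, of g "\<lambda>y. y @ y\<^sub>2" z\<^sub>2] \<Psi>x by simp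
  finally have left: "(\<Sum>u'\<in>hamming_nbrs N\<^sub>1 q u. g (?\<Psi> (u' @ v))) = \<dots>" .
  have "(\<Sum>v'\<in>hamming_nbrs N\<^sub>2 q v. g (?\<Psi> (u @ v'))) =
      (\<Sum>v'\<in>hamming_nbrs N\<^sub>2 q v. g (y\<^sub>1 @ fst (\<Psi>\<^sub>2 v'), (snd (\<Psi>\<^sub>2 v') + z\<^sub>1) mod q))"
    using \<Psi>u split(2) by (intro sum.cong) (simp_all add: hamming_vertices_length add.commute)
  also have "\<dots> = (\<Sum>y\<in>hamming_nbrs n\<^sub>2 q y\<^sub>2. \<Sum>z<q. g (y\<^sub>1 @ y, z)) +
      m\<^sub>2 * (\<Sum>z\<in>{..<q} - {snd (?\<Psi> x)}. g (fst (?\<Psi> x), z))"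
    using equitable_map_sum_translate[OF \<Psi>\<^sub>2 split(3) \<Psi>v, of g "\<lambda>y. y\<^sub>1 @ y" z\<^sub>1] \<Psi>x
    by (simp add: add.commute[of z\<^sub>2 z\<^sub>1])
  finally have right: "(\<Sum>v'\<in>hamming_nbrs N\<^sub>2 q v. g (?\<Psi> (u @ v'))) = \<dots>" .
  show "(\<Sum>x'\<in>hamming_nbrs (N\<^sub>1 + N\<^sub>2) q x. g (?\<Psi> x')) =
      (\<Sum>y\<in>hamming_nbrs (n\<^sub>1 + n\<^sub>2) q (fst (?\<Psi> x)). \<Sum>z<q. g (y, z)) +
      (m\<^sub>1 + m\<^sub>2) * (\<Sum>z\<in>{..<q} - {snd (?\<Psi> x)}. g (fst (?\<Psi> x), z))"
    using sum_hamming_nbrs_append[OF split(2,3), of "\<lambda>x'. g (?\<Psi> x')"]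
      sum_hamming_nbrs_append[OF y\<^sub>1(1) y\<^sub>2(1), of "\<lambda>y. \<Sum>z<q. g (y, z)"]
      left right split(1) \<Psi>x
    by (simp add: algebra_simps)
qed

lemma equitable_map_coordinates: "0 < q \<Longrightarrow> \<exists>\<Psi>. equitable_map m q 0 m \<Psi>"
proof (induction m)
  case 0
  then show ?case using equitable_map_Nil by blast
next
  case (Suc m)
  then obtain \<Psi> where "equitable_map m q 0 m \<Psi>" by blast
  from equitable_map_append[OF equitable_map_coordinate this] show ?case by auto
qed

section \<open>Perfect codes in \<open>H(q+1,q)\<close>\<close>

lemma perfect_code_1_eq_if_dist_le_2:
  assumes C: "perfect_code_1 n q C" and c: "c \<in> C" and c': "c' \<in> C" and "hamming_dist c c' \<le> 2"
  shows "c = c'"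
proof -
  let ?D = "{i. i < length c \<and> c ! i \<noteq> c' ! i}"
  have cH: "c \<in> hamming_vertices n q" and c'H: "c' \<in> hamming_vertices n q"
    using C c c' unfolding perfect_code_1_def by auto
  then have len: "length c = n" "length c' = n" by (simp_all add: hamming_vertices_length)
  show ?thesis
  proof (cases "?D = {}")
    case True
    then show ?thesis using len by (auto intro: nth_equalityI)
  next
    case False
    then obtain i where i: "i \<in> ?D" by blast
    define w where "w = c[i := c' ! i]"
    have "c' ! i < q" using c'H i len hamming_vertices_nth by auto
    then have wH: "w \<in> hamming_vertices n q"
      using cH set_update_subset_insert[of c i "c' ! i"] unfolding w_def hamming_vertices_def by auto
    have "{k. k < length w \<and> w ! k \<noteq> c ! k} \<subseteq> {i}" using i unfolding w_def by (auto simp: nth_list_update)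
    then have "hamming_dist w c \<le> 1"
      unfolding hamming_dist_def using card_mono[of "{i}"] by fastforce
    moreover have "{k. k < length w \<and> w ! k \<noteq> c' ! k} = ?D - {i}"
      using i unfolding w_def by (auto simp: nth_list_update)
    then have "hamming_dist w c' \<le> 1"
      using i \<open>hamming_dist c c' \<le> 2\<close> unfolding hamming_dist_def by simp
    ultimately show ?thesis
      using C wH c c' unfolding perfect_code_1_def by blast
  qed
qed

locale perfect_code_Suc_q =
  fixes q :: nat and C :: "nat list set"
  assumes perfect: "perfect_code_1 (Suc q) q C" and two_le_q: "2 \<le> q"
begin

lemma code_subset: "c \<in> C \<Longrightarrow> c \<in> hamming_vertices (Suc q) q"
  using perfect unfolding perfect_code_1_def by blast

lemma code_covers: "w \<in> hamming_vertices (Suc q) q \<Longrightarrow> \<exists>c\<in>C. hamming_dist w c \<le> 1"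
  using perfect unfolding perfect_code_1_def by blast

lemma code_unique:
  "w \<in> hamming_vertices (Suc q) q \<Longrightarrow> c \<in> C \<Longrightarrow> c' \<in> C \<Longrightarrow>
    hamming_dist w c \<le> 1 \<Longrightarrow> hamming_dist w c' \<le> 1 \<Longrightarrow> c = c'"
  using perfect unfolding perfect_code_1_def by blast

lemma code_split:
  assumes "c \<in> C"
  obtains x a r where "c = x @ [a, r]" "x \<in> hamming_vertices (q - 1) q" "a < q" "r < q"
proof -
  have "c \<in> hamming_vertices ((q - 1) + 2) q" using code_subset[OF assms] two_le_q by simp
  note split = hamming_vertices_append_split[OF this]
  then obtain a r where "drop (q - 1) c = [a, r]" "a < q" "r < q"
    unfolding hamming_vertices_def by (auto simp: numeral_2_eq_2 length_Suc_conv)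
  then show thesis using that split by metis
qed

lemma check_digits_unique:
  assumes "x @ [a, r] \<in> C" "x @ [a', r'] \<in> C"
  shows "a = a' \<and> r = r'"
proof -
  have "hamming_dist (x @ [a, r]) (x @ [a', r']) \<le> 2"
    using hamming_dist_le_length[of "[a, r]" "[a', r']"] by (simp add: hamming_dist_append)
  then show ?thesis using perfect_code_1_eq_if_dist_le_2[OF perfect assms] by simp
qed

text \<open>Every word of length \<open>q - 1\<close> is the prefix of some codeword: otherwise each of the
  \<open>q\<^sup>2\<close> words \<open>x @ [a, r]\<close> is covered through its own neighbour of \<open>x\<close>, but \<open>x\<close> has only
  \<open>(q - 1)\<^sup>2\<close> neighbours.\<close>
lemma check_digits_exist:
  assumes x: "x \<in> hamming_vertices (q - 1) q"
  shows "\<exists>a r. x @ [a, r] \<in> C"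
proof (rule ccontr)
  assume none: "\<nexists>a r. x @ [a, r] \<in> C"
  have "\<exists>x'\<in>hamming_nbrs (q - 1) q x. x' @ [a, r] \<in> C" if "a < q" "r < q" for a r
  proof -
    have w: "x @ [a, r] \<in> hamming_vertices (Suc q) q"
      using x that two_le_q unfolding hamming_vertices_def by auto
    obtain c where c: "c \<in> C" "hamming_dist (x @ [a, r]) c \<le> 1" using code_covers[OF w] by blast
    obtain x' a' r' where c_eq: "c = x' @ [a', r']" and x': "x' \<in> hamming_vertices (q - 1) q"
      using code_split[OF c(1)] by blast
    have len: "length x = length x'" using x x' by (simp add: hamming_vertices_length)
    have "x' \<noteq> x" using none c c_eq by blast
    then have "hamming_dist x x' \<noteq> 0" using len hamming_dist_eq_0_iff by blast
    moreover have "hamming_dist x x' + hamming_dist [a, r] [a', r'] \<le> 1"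
      using c c_eq len by (simp add: hamming_dist_append)
    ultimately have "hamming_dist x x' = 1" "a' = a" "r' = r" by (auto split: if_splits)
    then show ?thesis
      using x' c c_eq unfolding hamming_nbrs_def hamming_adj_def by auto
  qed
  then have "\<forall>p\<in>{..<q} \<times> {..<q}. \<exists>x'. x' \<in> hamming_nbrs (q - 1) q x \<and> x' @ [fst p, snd p] \<in> C"
    by auto
  from bchoice[OF this] obtain h
    where h: "\<forall>p\<in>{..<q} \<times> {..<q}. h p \<in> hamming_nbrs (q - 1) q x \<and> h p @ [fst p, snd p] \<in> C"
    by blast
  have "inj_on h ({..<q} \<times> {..<q})"
  proof (rule inj_onI)
    fix p p' assume "p \<in> {..<q} \<times> {..<q}" "p' \<in> {..<q} \<times> {..<q}" "h p = h p'"
    then have "h p @ [fst p, snd p] \<in> C" "h p @ [fst p', snd p'] \<in> C" using h by metis+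
    then show "p = p'" using check_digits_unique by (simp add: prod_eq_iff)
  qed
  then have "card ({..<q} \<times> {..<q}) \<le> card (hamming_nbrs (q - 1) q x)"
    using h by (intro card_inj_on_le) auto
  then have "q * q \<le> (q - 1) * (q - 1)"
    using card_hamming_nbrs[OF x] by (simp add: card_cartesian_product)
  moreover have "(q - 1) * (q - 1) < q * q" using two_le_q by (intro mult_strict_mono) auto
  ultimately show False by simp
qed

definition shift_last :: "nat \<Rightarrow> nat list \<Rightarrow> nat list" where
  "shift_last p u = butlast u @ [(last u + p) mod q]"

lemma hamming_vertices_qE:
  assumes "u \<in> hamming_vertices q q"
  obtains b l where "u = b @ [l]" "b \<in> hamming_vertices (q - 1) q" "l < q"
  using hamming_vertices_Suc_split[of u "q - 1" q] assms two_le_q by auto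

lemma shift_last_snoc [simp]: "shift_last p (b @ [l]) = b @ [(l + p) mod q]"
  unfolding shift_last_def by simp

lemma shift_last_in_hamming_vertices:
  "u \<in> hamming_vertices q q \<Longrightarrow> shift_last p u \<in> hamming_vertices q q"
  using two_le_q unfolding shift_last_def hamming_vertices_def by (auto dest: in_set_butlastD)

lemma hamming_dist_shift_last:
  assumes u: "u \<in> hamming_vertices q q" and u': "u' \<in> hamming_vertices q q"
  shows "hamming_dist (shift_last p u) (shift_last p u') = hamming_dist u u'"
proof -
  obtain b l b' l' where "u = b @ [l]" "b \<in> hamming_vertices (q - 1) q" "l < q"
    and "u' = b' @ [l']" "b' \<in> hamming_vertices (q - 1) q" "l' < q"
    using hamming_vertices_qE[OF u] hamming_vertices_qE[OF u'] by metis
  moreover have "(l + p) mod q = (l' + p) mod q \<longleftrightarrow> l = l'"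
    using mod_add_right_inj[OF \<open>l < q\<close> \<open>l' < q\<close>] by auto
  ultimately show ?thesis
    by (simp add: hamming_dist_append hamming_dist_singleton hamming_vertices_length)
qed

lemma shift_last_inj:
  assumes "u \<in> hamming_vertices q q" "v \<in> hamming_vertices q q" "shift_last p u = shift_last p v"
  shows "u = v"
  using hamming_dist_shift_last[OF assms(1,2), of p] assms hamming_dist_eq_0_iff
  by (simp add: hamming_vertices_length)

lemma shift_last_inverse:
  assumes "t \<in> hamming_vertices q q" "p \<le> q"
  shows "shift_last p (shift_last (q - p) t) = t"
proof -
  obtain b l where "t = b @ [l]" "l < q" using hamming_vertices_qE[OF assms(1)] by metis
  moreover have "((l + (q - p)) mod q + p) mod q = l"
    using assms(2) \<open>l < q\<close> by (simp add: mod_add_left_eq)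
  ultimately show ?thesis by simp
qed

definition label :: "nat list \<Rightarrow> nat \<times> nat" where
  "label u = (THE (p, r). p < q \<and> shift_last p u @ [r] \<in> C)"

lemma label_ex1:
  assumes u: "u \<in> hamming_vertices q q"
  shows "\<exists>!(p, r). p < q \<and> shift_last p u @ [r] \<in> C"
proof -
  obtain b l where u_eq: "u = b @ [l]" and b: "b \<in> hamming_vertices (q - 1) q" and "l < q"
    using hamming_vertices_qE[OF u] by metis
  obtain a r where ar: "b @ [a, r] \<in> C" using check_digits_exist[OF b] by blast
  then have "a < q" using code_subset[OF ar] unfolding hamming_vertices_def by auto
  define p where "p = (a + q - l) mod q"
  have "p < q" "(l + p) mod q = a"
    using two_le_q mod_add_eq_iff[OF \<open>l < q\<close> \<open>a < q\<close>] unfolding p_def by simp_all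
  then have "p < q \<and> shift_last p u @ [r] \<in> C" using ar u_eq by simp
  moreover have "p' = p \<and> r' = r" if "p' < q" "shift_last p' u @ [r'] \<in> C" for p' r'
  proof -
    have "(l + p') mod q = a \<and> r' = r"
      using that ar check_digits_unique u_eq by simp
    then show ?thesis
      using mod_add_right_inj[of p' q p l] \<open>p < q\<close> \<open>(l + p) mod q = a\<close> that(1)
      by (simp add: add.commute)
  qed
  ultimately show ?thesis by blast
qed

lemma label_eq_iff:
  "u \<in> hamming_vertices q q \<Longrightarrow> p < q \<Longrightarrow> label u = (p, r) \<longleftrightarrow> shift_last p u @ [r] \<in> C"
  using the1_equality[OF label_ex1] theI'[OF label_ex1] unfolding label_def by fastforce

lemma label_less:
  assumes "u \<in> hamming_vertices q q"
  shows "fst (label u) < q" "snd (label u) < q"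
proof -
  obtain p r where "label u = (p, r)" by fastforce
  moreover have "p < q \<and> shift_last p u @ [r] \<in> C"
    using theI'[OF label_ex1[OF assms]] calculation unfolding label_def by simp
  ultimately show "fst (label u) < q" "snd (label u) < q"
    using code_subset[of "shift_last p u @ [r]"] unfolding hamming_vertices_def by auto
qed

lemma label_nbr_part_ne:
  assumes u: "u \<in> hamming_vertices q q" and u': "u' \<in> hamming_nbrs q q u"
  shows "fst (label u') \<noteq> fst (label u)"
proof
  assume eq: "fst (label u') = fst (label u)"
  obtain p r r' where l: "label u = (p, r)" "label u' = (p, r')"
    using eq by (metis prod.collapse)
  have u'H: "u' \<in> hamming_vertices q q" and adj: "hamming_dist u u' = 1"
    using u' unfolding hamming_nbrs_def hamming_adj_def by auto
  have "p < q" using label_less[OF u] l by simp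
  then have codewords: "shift_last p u @ [r] \<in> C" "shift_last p u' @ [r'] \<in> C"
    using label_eq_iff[OF u] label_eq_iff[OF u'H] l by auto
  have "length (shift_last p u) = length (shift_last p u')"
    using hamming_vertices_length[OF shift_last_in_hamming_vertices[OF u]]
      hamming_vertices_length[OF shift_last_in_hamming_vertices[OF u'H]] by simp
  then have "hamming_dist (shift_last p u @ [r]) (shift_last p u' @ [r']) \<le> 2"
    using hamming_dist_shift_last[OF u u'H] adj
    by (simp add: hamming_dist_append hamming_dist_singleton)
  then have "shift_last p u = shift_last p u'"
    using perfect_code_1_eq_if_dist_le_2[OF perfect codewords] by simp
  then have "u = u'" by (rule shift_last_inj[OF u u'H])
  then show False using adj by simp
qed

lemma label_nbr_ex1:
  assumes u: "u \<in> hamming_vertices q q" and p: "p < q" "p \<noteq> fst (label u)" and r: "r < q"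
  shows "\<exists>!u'. u' \<in> hamming_nbrs q q u \<and> label u' = (p, r)"
proof -
  let ?s = "shift_last p u"
  have sH: "?s \<in> hamming_vertices q q" using shift_last_in_hamming_vertices[OF u] .
  then have w: "?s @ [r] \<in> hamming_vertices (Suc q) q"
    using append_in_hamming_vertices_iff[of ?s q "[r]" 1] r by (simp add: hamming_vertices_length)
  obtain c where c: "c \<in> C" "hamming_dist (?s @ [r]) c \<le> 1" using code_covers[OF w] by blast
  obtain t r' where c_eq: "c = t @ [r']" and tH: "t \<in> hamming_vertices q q"
    using hamming_vertices_Suc_split[OF code_subset[OF c(1)]] by metis
  have len: "length ?s = length t" using sH tH by (simp add: hamming_vertices_length)
  have "?s \<noteq> t"
    using c c_eq label_eq_iff[OF u p(1)] p(2) by (metis fst_conv)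
  then have "hamming_dist ?s t \<noteq> 0" using len hamming_dist_eq_0_iff by blast
  moreover have "hamming_dist ?s t + hamming_dist [r] [r'] \<le> 1"
    using c c_eq len by (simp add: hamming_dist_append)
  ultimately have dist_t: "hamming_dist ?s t = 1" and "r' = r"
    by (auto simp: hamming_dist_singleton split: if_splits)
  define u' where "u' = shift_last (q - p) t"
  have u'H: "u' \<in> hamming_vertices q q" and s_u': "shift_last p u' = t"
    using shift_last_in_hamming_vertices[OF tH] shift_last_inverse[OF tH] p(1) unfolding u'_def by auto
  have nbr: "u' \<in> hamming_nbrs q q u"
    using dist_t hamming_dist_shift_last[OF u u'H, of p] u'H s_u'
    unfolding hamming_nbrs_def hamming_adj_def by simp
  have "label u' = (p, r)" using label_eq_iff[OF u'H p(1)] s_u' c c_eq \<open>r' = r\<close> by simp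
  moreover have "v = u'" if v: "v \<in> hamming_nbrs q q u" "label v = (p, r)" for v
  proof -
    have vH: "v \<in> hamming_vertices q q" and "hamming_dist u v = 1"
      using v unfolding hamming_nbrs_def hamming_adj_def by auto
    moreover have "length ?s = length (shift_last p v)"
      using hamming_vertices_length[OF sH] hamming_vertices_length[OF shift_last_in_hamming_vertices[OF vH]]
      by simp
    ultimately have "hamming_dist (?s @ [r]) (shift_last p v @ [r]) \<le> 1"
      using hamming_dist_shift_last[OF u vH, of p] by (simp add: hamming_dist_append)
    moreover have "shift_last p v @ [r] \<in> C" using label_eq_iff[OF vH p(1), of r] v by simp
    ultimately have "shift_last p v @ [r] = c"
      using code_unique[OF w _ c(1) _ c(2)] by blast
    then have "shift_last p v = shift_last p u'" using c_eq s_u' \<open>r' = r\<close> by simp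
    then show ?thesis using shift_last_inj[OF vH u'H] by simp
  qed
  ultimately show ?thesis using nbr by blast
qed

text \<open>\<open>label\<close> is a covering map of \<open>H(q,q)\<close> onto the complete multipartite graph on
  \<open>\<int>\<^sub>q \<times> \<int>\<^sub>q\<close> whose parts are the sets \<open>{p} \<times> \<int>\<^sub>q\<close>.\<close>
lemma bij_betw_label_nbrs:
  assumes u: "u \<in> hamming_vertices q q"
  shows "bij_betw label (hamming_nbrs q q u) (({..<q} - {fst (label u)}) \<times> {..<q})"
proof (rule bij_betwI')
  fix v w assume "v \<in> hamming_nbrs q q u" "w \<in> hamming_nbrs q q u"
  moreover have "v \<in> hamming_vertices q q" using calculation(1) unfolding hamming_nbrs_def by simp
  ultimately show "label v = label w \<longleftrightarrow> v = w"
    using label_nbr_ex1[OF u, of "fst (label v)" "snd (label v)"] label_less label_nbr_part_ne[OF u]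
    by (metis prod.collapse)
next
  fix v assume "v \<in> hamming_nbrs q q u"
  then show "label v \<in> ({..<q} - {fst (label u)}) \<times> {..<q}"
    using label_less label_nbr_part_ne[OF u] unfolding hamming_nbrs_def by (auto simp: mem_Times_iff)
next
  fix pr assume "pr \<in> ({..<q} - {fst (label u)}) \<times> {..<q}"
  then show "\<exists>v\<in>hamming_nbrs q q u. pr = label v"
    using label_nbr_ex1[OF u, of "fst pr" "snd pr"] by (auto simp: mem_Times_iff)
qed

lemma equitable_map_label: "equitable_map q q 1 0 (\<lambda>u. ([fst (label u)], snd (label u)))"
  unfolding equitable_map_def
proof (intro ballI conjI allI)
  fix u and g :: "nat list \<times> nat \<Rightarrow> nat" assume u: "u \<in> hamming_vertices q q"
  show "fst ([fst (label u)], snd (label u)) \<in> hamming_vertices 1 q"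
    "snd ([fst (label u)], snd (label u)) < q"
    using label_less[OF u] by simp_all
  have "(\<Sum>u'\<in>hamming_nbrs q q u. g ([fst (label u')], snd (label u'))) =
      (\<Sum>pr\<in>({..<q} - {fst (label u)}) \<times> {..<q}. g ([fst pr], snd pr))"
    by (rule sum.reindex_bij_betw[OF bij_betw_label_nbrs[OF u], of "\<lambda>pr. g ([fst pr], snd pr)"])
  also have "\<dots> = (\<Sum>p\<in>{..<q} - {fst (label u)}. \<Sum>z<q. g ([p], z))"
    by (simp add: sum.cartesian_product split_def)
  also have "\<dots> = (\<Sum>y\<in>hamming_nbrs 1 q [fst (label u)]. \<Sum>z<q. g (y, z))"
    by (simp add: hamming_nbrs_singleton sum.reindex inj_on_def)
  finally show "(\<Sum>u'\<in>hamming_nbrs q q u. g ([fst (label u')], snd (label u'))) =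
      (\<Sum>y\<in>hamming_nbrs 1 q (fst ([fst (label u)], snd (label u))). \<Sum>z<q. g (y, z)) +
      0 * (\<Sum>z\<in>{..<q} - {snd ([fst (label u)], snd (label u))}. g (fst ([fst (label u)], snd (label u)), z))"
    by simp
qed

lemma equitable_map_exists: "\<exists>\<Psi>. equitable_map (q * n + m) q n m \<Psi>"
proof (induction n)
  case 0
  then show ?case using equitable_map_coordinates two_le_q by simp
next
  case (Suc n)
  then obtain \<Psi> where "equitable_map (q * n + m) q n m \<Psi>" by blast
  from equitable_map_append[OF equitable_map_label this] show ?case
    by (auto simp: add.assoc)
qed

end

section \<open>Lifting a colouring\<close>

lemma sum_lessThan_indicator_less:
  fixes s q :: nat
  shows "(\<Sum>z<q. if z < s then 1 else 0 :: nat) = min s q"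
    and "(\<Sum>z<q. if z < s then 0 else 1 :: nat) = q - s"
proof -
  have "(\<Sum>z<q. if z < s then 1 else 0 :: nat) = card {z\<in>{..<q}. z < s}"
    by (simp add: sum.If_cases Int_def)
  also have "{z\<in>{..<q}. z < s} = {..<min s q}" by auto
  finally show "(\<Sum>z<q. if z < s then 1 else 0 :: nat) = min s q" by simp
  have "(\<Sum>z<q. if z < s then 0 else 1 :: nat) = card {z\<in>{..<q}. \<not> z < s}"
    by (simp add: sum.If_cases Int_def)
  also have "{z\<in>{..<q}. \<not> z < s} = {s..<q}" by auto
  finally show "(\<Sum>z<q. if z < s then 0 else 1 :: nat) = q - s" by simp
qed

definition threshold_lift ::
    "(nat list \<Rightarrow> nat list \<times> nat) \<Rightarrow> (nat list \<Rightarrow> nat) \<Rightarrow> (nat \<Rightarrow> nat) \<Rightarrow> nat list \<Rightarrow> nat" where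
  "threshold_lift \<Psi> f t x = (if snd (\<Psi> x) < t (f (fst (\<Psi> x))) then 1 else 2)"

lemma nbr_count_threshold_lift:
  assumes \<Psi>: "equitable_map N q n m \<Psi>" and f: "bc_coloring n q b c f"
    and bc: "b + c = n * (q - 1) + m" and t: "t 1 \<le> q" "t 2 \<le> q"
    and x: "x \<in> hamming_vertices N q"
  shows "threshold_lift \<Psi> f t x = 2 \<Longrightarrow> nbr_count N q (threshold_lift \<Psi> f t) x 1 = c * t 1 + b * t 2"
    and "threshold_lift \<Psi> f t x = 1 \<Longrightarrow>
      nbr_count N q (threshold_lift \<Psi> f t) x 2 = c * (q - t 1) + b * (q - t 2)"
proof -
  let ?F = "threshold_lift \<Psi> f t" and ?y = "fst (\<Psi> x)" and ?z = "snd (\<Psi> x)"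
  define W where "W j col = (\<Sum>z<q. if (if z < t col then 1 else 2) = j then 1 else 0 :: nat)" for j col :: nat
  have count: "nbr_count N q ?F x j = c * W j 1 + b * W j 2" if "?F x \<noteq> j" for j
  proof -
    define g where "g yz = (if (if snd yz < t (f (fst yz)) then 1 else 2) = j then 1 else 0 :: nat)" for yz
    have "nbr_count N q ?F x j = (\<Sum>x'\<in>hamming_nbrs N q x. g (\<Psi> x'))"
      unfolding nbr_count_eq_sum g_def threshold_lift_def by simp
    also have "\<dots> = (\<Sum>y\<in>hamming_nbrs n q ?y. W j (f y)) + m * (\<Sum>z\<in>{..<q} - {?z}. g (?y, z))"
      unfolding equitable_mapD(3)[OF \<Psi> x] by (simp add: W_def g_def)
    also have "(\<Sum>z\<in>{..<q} - {?z}. g (?y, z)) = W j (f ?y)"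
      using that equitable_mapD(2)[OF \<Psi> x]
      by (simp add: sum_diff1_nat W_def g_def threshold_lift_def)
    finally show ?thesis
      using bc_coloring_weighted_nbr_sum[OF f bc equitable_mapD(1)[OF \<Psi> x], of "W j"] by simp
  qed
  have "W 1 col = (\<Sum>z<q. if z < t col then 1 else 0)" "W 2 col = (\<Sum>z<q. if z < t col then 0 else 1)"
    for col unfolding W_def by (auto intro: sum.cong)
  then have "W 1 col = min (t col) q" "W 2 col = q - t col" for col
    by (simp_all add: sum_lessThan_indicator_less)
  then show "?F x = 2 \<Longrightarrow> nbr_count N q ?F x 1 = c * t 1 + b * t 2"
    and "?F x = 1 \<Longrightarrow> nbr_count N q ?F x 2 = c * (q - t 1) + b * (q - t 2)"
    using count[of 1] count[of 2] t by simp_all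
qed

lemma bc_coloring_threshold_lift:
  assumes \<Psi>: "equitable_map N q n m \<Psi>" and f: "bc_coloring n q b c f"
    and bc: "b + c = n * (q - 1) + m" and t: "t 1 \<le> q" "t 2 \<le> q" "t 1 + t 2 \<notin> {0, 2 * q}"
  shows "bc_coloring N q (c * (q - t 1) + b * (q - t 2)) (c * t 1 + b * t 2) (threshold_lift \<Psi> f t)"
proof (rule bc_coloringI)
  show "\<forall>x\<in>hamming_vertices N q. threshold_lift \<Psi> f t x \<in> {1, 2}"
    unfolding threshold_lift_def by simp
  show "\<forall>x\<in>hamming_vertices N q. threshold_lift \<Psi> f t x = 1 \<longrightarrow>
      nbr_count N q (threshold_lift \<Psi> f t) x 2 = c * (q - t 1) + b * (q - t 2)"
    "\<forall>x\<in>hamming_vertices N q. threshold_lift \<Psi> f t x = 2 \<longrightarrow>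
      nbr_count N q (threshold_lift \<Psi> f t) x 1 = c * t 1 + b * t 2"
    using nbr_count_threshold_lift[OF \<Psi> f bc t(1,2)] by blast+
  have "0 < b" "0 < c" using bc_coloring_pos[OF f] by auto
  moreover have "t 1 < q \<or> t 2 < q" "0 < t 1 \<or> 0 < t 2" using t by auto
  ultimately show "0 < c * (q - t 1) + b * (q - t 2)" "0 < c * t 1 + b * t 2" "0 < q"
    by auto
qed

lemma main_eigenvalue_nonpos:
  assumes "1 \<le> q" "main_eigenvalue n q b c \<le> 0"
  shows "b + c = n * (q - 1) + nat (- main_eigenvalue n q b c)"
proof -
  have "int (n * (q - 1)) = int n * (int q - 1)" using assms(1) by (simp add: of_nat_diff)
  then show ?thesis using assms(2) unfolding main_eigenvalue_def by linarith
qed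

lemma main_eigenvalue_lift:
  assumes "1 \<le> q" "b + c = n * (q - 1) + m" "b' + c' = q * (b + c)"
  shows "main_eigenvalue (q * n + m) q b' c' = main_eigenvalue n q b c"
proof -
  have "int (n * (q - 1)) = int n * (int q - 1)" using assms(1) by (simp add: of_nat_diff)
  then have bc: "int b + int c = int n * (int q - 1) + int m"
    using arg_cong[OF assms(2), of int] by simp
  have b'c': "int b' + int c' = int q * (int b + int c)"
    using arg_cong[OF assms(3), of int] by simp
  show ?thesis unfolding main_eigenvalue_def b'c' bc by (simp add: algebra_simps)
qed

lemma threshold_parameters_add:
  fixes b c q t\<^sub>1 t\<^sub>2 :: nat
  assumes "t\<^sub>1 \<le> q" "t\<^sub>2 \<le> q"
  shows "c * (q - t\<^sub>1) + b * (q - t\<^sub>2) + (c * t\<^sub>1 + b * t\<^sub>2) = q * (b + c)"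
proof -
  have "c * (q - t\<^sub>1) + c * t\<^sub>1 = c * q" "b * (q - t\<^sub>2) + b * t\<^sub>2 = b * q"
    using assms by (simp_all flip: add_mult_distrib2)
  then show ?thesis by (simp add: algebra_simps)
qed

theorem theorem6:
  fixes n q b c t1 t2 :: nat and f :: "nat list \<Rightarrow> nat"
  assumes "\<exists>C. perfect_code_1 (q + 1) q C"
    and "bc_coloring n q b c f"
    and "main_eigenvalue n q b c \<le> 0"
    and "t1 \<le> q" and "t2 \<le> q"
    and "t1 + t2 \<notin> {0, 2 * q}"
  shows "\<exists>F. bc_coloring (nat (int q * int n - main_eigenvalue n q b c)) q
                (q * (b + c) - (c * t1 + b * t2)) (c * t1 + b * t2) F
           \<and> main_eigenvalue (nat (int q * int n - main_eigenvalue n q b c)) q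
                (q * (b + c) - (c * t1 + b * t2)) (c * t1 + b * t2) = main_eigenvalue n q b c"
proof -
  obtain C where C: "perfect_code_1 (Suc q) q C" using assms(1) by auto
  have q: "2 \<le> q" using assms(2) perfect_2_coloring_two_le unfolding bc_coloring_def by blast
  interpret perfect_code_Suc_q q C using C q by unfold_locales
  define m where "m = nat (- main_eigenvalue n q b c)"
  have bc: "b + c = n * (q - 1) + m"
    using main_eigenvalue_nonpos[OF _ assms(3)] q unfolding m_def by simp
  have "int q * int n - main_eigenvalue n q b c = int (q * n + m)"
    using assms(3) unfolding m_def by simp
  then have N: "nat (int q * int n - main_eigenvalue n q b c) = q * n + m"
    by (simp only: nat_int)
  obtain \<Psi> where \<Psi>: "equitable_map (q * n + m) q n m \<Psi>" using equitable_map_exists by blast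
  define t where "t col = (if col = 1 then t1 else t2)" for col :: nat
  have "bc_coloring (q * n + m) q (c * (q - t1) + b * (q - t2)) (c * t1 + b * t2) (threshold_lift \<Psi> f t)"
    using bc_coloring_threshold_lift[OF \<Psi> assms(2) bc, of t] assms(4-6) unfolding t_def by simp
  moreover note parameters = threshold_parameters_add[OF assms(4,5), of c b]
  then have "q * (b + c) - (c * t1 + b * t2) = c * (q - t1) + b * (q - t2)" by simp
  ultimately show ?thesis
    using main_eigenvalue_lift[OF _ bc parameters] q unfolding N by auto
qed

end
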